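(* Let $F$ be a quantifier-free formula and let $\mathbf c$ be a finite set of object constants containing every object constant occurring in $F$. Then the formula $F^*(\mathbf e_{\mathbf c})\rightarrow\mathit{in}_{\mathbf c}(\mathrm{RV}(F))$ is logically valid.
   Context: Formulas are first-order formulas with object constants, predicate constants and equality but no function constants of arity $>0$; primitive connectives are $\bot,\land,\lor,\rightarrow$ ($\neg F$ is $F\rightarrow\bot$, $\top$ is $\bot\rightarrow\bot$). Let $\mathbf p=p_1,\dots,p_n$ be the predicate constants occurring in $F$ and $\mathbf u=u_1,\dots,u_n$ predicate variables of matching arities. $F^*(\mathbf u)$ is defined recursively: $p_i(\mathbf t)^*=u_i(\mathbf t)$; $(t_1=t_2)^*=(t_1=t_2)$; $\bot^*=\bot$; $(G\land H)^*=G^*\land H^*$; $(G\lor H)^*=G^*\lor H^*$; $(G\rightarrow H)^*=(G^*\rightarrow H^* )\land(G\rightarrow H)$; $(\forall xG)^*=\forall xG^*$; $(\exists xG)^*=\exists xG^*$. For a finite set $\mathbf c$ of object constants, $\mathit{in}_{\mathbf c}(x_1,\dots,x_m)$ denotes $\bigwedge_{1\le j\le m}\bigvee_{c\in\mathbf c}x_j=c$; for a finite set $V$ of variables, $\mathit{in}_{\mathbf c}(V)$ denotes $\mathit{in}_{\mathbf c}$ applied to the variables of $V$ (the empty conjunction being $\top$). $\mathbf e_{\mathbf c}$ denotes the list of predicate expressions $\lambda\mathbf x(p_i(\mathbf x)\land\mathit{in}_{\mathbf c}(\mathbf x))$, and $F^*(\mathbf e_{\mathbf c})$ is the result of replacing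 each atomic part $u_i(\mathbf t)$ of $F^*(\mathbf u)$ by $p_i(\mathbf t)\land\mathit{in}_{\mathbf c}(\mathbf t)$. Restricted variables: $\mathrm{RV}(F)$ for quantifier-free $F$: if $F$ is an equality between two variables, $\mathrm{RV}(F)=\emptyset$; if $F$ is any other atomic formula, $\mathrm{RV}(F)$ is the set of variables occurring in $F$; $\mathrm{RV}(\bot)=\emptyset$; $\mathrm{RV}(G\land H)=\mathrm{RV}(G)\cup\mathrm{RV}(H)$; $\mathrm{RV}(G\lor H)=\mathrm{RV}(G)\cap\mathrm{RV}(H)$; $\mathrm{RV}(G\rightarrow H)=\emptyset$. *)

theory Defs
  imports Main
begin

datatype 'c trm = Var nat | Cst 'c

datatype ('c, 'p) fm =
    Bot
  | Pred 'p "'c trm list"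
  | Eq "'c trm" "'c trm"
  | And "('c, 'p) fm" "('c, 'p) fm"
  | Or "('c, 'p) fm" "('c, 'p) fm"
  | Imp "('c, 'p) fm" "('c, 'p) fm"
  | All nat "('c, 'p) fm"
  | Ex nat "('c, 'p) fm"

definition Top :: "('c, 'p) fm" where "Top = Imp Bot Bot"

(* Semantics: domain is the type 'd; I interprets object constants, P predicate constants
   (a predicate of arity n is applied to lists of length n), s is a variable assignment *)
fun tval :: "('c \<Rightarrow> 'd) \<Rightarrow> (nat \<Rightarrow> 'd) \<Rightarrow> 'c trm \<Rightarrow> 'd" where
  "tval I s (Var x) = s x"
| "tval I s (Cst c) = I c"

fun eval :: "('c \<Rightarrow> 'd) \<Rightarrow> ('p \<Rightarrow> 'd list \<Rightarrow> bool) \<Rightarrow> (nat \<Rightarrow> 'd) \<Rightarrow> ('c, 'p) fm \<Rightarrow> bool" where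
  "eval I P s Bot = False"
| "eval I P s (Pred p ts) = P p (map (tval I s) ts)"
| "eval I P s (Eq t1 t2) = (tval I s t1 = tval I s t2)"
| "eval I P s (And F G) = (eval I P s F \<and> eval I P s G)"
| "eval I P s (Or F G) = (eval I P s F \<or> eval I P s G)"
| "eval I P s (Imp F G) = (eval I P s F \<longrightarrow> eval I P s G)"
| "eval I P s (All x F) = (\<forall>d. eval I P (s(x := d)) F)"
| "eval I P s (Ex x F) = (\<exists>d. eval I P (s(x := d)) F)"

definition valid :: "'d itself \<Rightarrow> ('c, 'p) fm \<Rightarrow> bool" where
  "valid (_ :: 'd itself) F = (\<forall>(I :: 'c \<Rightarrow> 'd) P s. eval I P s F)"

fun qfree :: "('c, 'p) fm \<Rightarrow> bool" where
  "qfree Bot = True"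
| "qfree (Pred p ts) = True"
| "qfree (Eq t1 t2) = True"
| "qfree (And F G) = (qfree F \<and> qfree G)"
| "qfree (Or F G) = (qfree F \<and> qfree G)"
| "qfree (Imp F G) = (qfree F \<and> qfree G)"
| "qfree (All x F) = False"
| "qfree (Ex x F) = False"

fun tconsts :: "'c trm \<Rightarrow> 'c set" where
  "tconsts (Var x) = {}"
| "tconsts (Cst c) = {c}"

fun tvars :: "'c trm \<Rightarrow> nat set" where
  "tvars (Var x) = {x}"
| "tvars (Cst c) = {}"

fun consts_fm :: "('c, 'p) fm \<Rightarrow> 'c set" where
  "consts_fm Bot = {}"
| "consts_fm (Pred p ts) = (\<Union>t\<in>set ts. tconsts t)"
| "consts_fm (Eq t1 t2) = tconsts t1 \<union> tconsts t2"
| "consts_fm (And F G) = consts_fm F \<union> consts_fm G"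
| "consts_fm (Or F G) = consts_fm F \<union> consts_fm G"
| "consts_fm (Imp F G) = consts_fm F \<union> consts_fm G"
| "consts_fm (All x F) = consts_fm F"
| "consts_fm (Ex x F) = consts_fm F"

fun star :: "('p \<Rightarrow> 'c trm list \<Rightarrow> ('c, 'p) fm) \<Rightarrow> ('c, 'p) fm \<Rightarrow> ('c, 'p) fm" where
  "star e Bot = Bot"
| "star e (Pred p ts) = e p ts"
| "star e (Eq t1 t2) = Eq t1 t2"
| "star e (And F G) = And (star e F) (star e G)"
| "star e (Or F G) = Or (star e F) (star e G)"
| "star e (Imp F G) = And (Imp (star e F) (star e G)) (Imp F G)"
| "star e (All x F) = All x (star e F)"
| "star e (Ex x F) = Ex x (star e F)"

definition big_and :: "('c, 'p) fm list \<Rightarrow> ('c, 'p) fm" where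
  "big_and Fs = foldr And Fs Top"

definition big_or :: "('c, 'p) fm list \<Rightarrow> ('c, 'p) fm" where
  "big_or Fs = foldr Or Fs Bot"

(* in_c(t_1,...,t_m), the finite set c of constants given as a list cs *)
definition in_c :: "'c list \<Rightarrow> 'c trm list \<Rightarrow> ('c, 'p) fm" where
  "in_c cs ts = big_and (map (\<lambda>t. big_or (map (\<lambda>c. Eq t (Cst c)) cs)) ts)"

definition in_c_vars :: "'c list \<Rightarrow> nat set \<Rightarrow> ('c, 'p) fm" where
  "in_c_vars cs V = in_c cs (map Var (sorted_list_of_set V))"

definition e_c :: "'c list \<Rightarrow> 'p \<Rightarrow> 'c trm list \<Rightarrow> ('c, 'p) fm" where
  "e_c cs p ts = And (Pred p ts) (in_c cs ts)"

fun is_var :: "'c trm \<Rightarrow> bool" where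
  "is_var (Var x) = True"
| "is_var (Cst c) = False"

(* restricted variables (only meaningful for quantifier-free formulas) *)
fun RV :: "('c, 'p) fm \<Rightarrow> nat set" where
  "RV Bot = {}"
| "RV (Pred p ts) = (\<Union>t\<in>set ts. tvars t)"
| "RV (Eq t1 t2) = (if is_var t1 \<and> is_var t2 then {} else tvars t1 \<union> tvars t2)"
| "RV (And F G) = RV F \<union> RV G"
| "RV (Or F G) = RV F \<inter> RV G"
| "RV (Imp F G) = {}"
| "RV (All x F) = {}"
| "RV (Ex x F) = {}"

end

theory Submission
  imports Defs
begin

text \<open>In \<open>F\<^sup>*(e\<^sub>c)\<close> an atom \<open>p(t)\<close> becomes \<open>p(t) \<and> in\<^sub>c(t)\<close>,
  which places every variable of \<open>t\<close> in \<open>c\<close>; an equation between a variable and a constant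
  places the variable in \<open>c\<close> because the constants of \<open>F\<close> belong to \<open>c\<close>. A conjunction
  restricts the variables restricted by either conjunct, a disjunction those restricted by
  both disjuncts, and an implication restricts nothing.\<close>

lemma eval_big_and: "eval I P s (big_and Fs) = (\<forall>G\<in>set Fs. eval I P s G)"
  by (induction Fs) (auto simp: big_and_def Top_def)

lemma eval_big_or: "eval I P s (big_or Fs) = (\<exists>G\<in>set Fs. eval I P s G)"
  by (induction Fs) (auto simp: big_or_def)

lemma eval_in_c: "eval I P s (in_c cs ts) = (\<forall>t\<in>set ts. \<exists>c\<in>set cs. tval I s t = I c)"
  by (auto simp: in_c_def eval_big_and eval_big_or)

lemma eval_in_c_vars:
  assumes "finite V"
  shows "eval I P s (in_c_vars cs V) = (\<forall>x\<in>V. \<exists>c\<in>set cs. s x = I c)"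
  using assms by (auto simp: in_c_vars_def eval_in_c)

lemma finite_tvars [simp]: "finite (tvars t)"
  by (cases t) auto

lemma mem_tvars_iff: "x \<in> tvars t \<longleftrightarrow> t = Var x"
  by (cases t) auto

lemma finite_RV: "finite (RV F)"
  by (induction F) auto

lemma eval_star_e_c_imp_RV_in_consts:
  assumes "consts_fm F \<subseteq> set cs"
    and "eval I P s (star (e_c cs) F)"
    and "x \<in> RV F"
  shows "\<exists>c\<in>set cs. s x = I c"
  using assms
proof (induction F)
  case (Pred p ts)
  then have "Var x \<in> set ts"
    by (auto simp: mem_tvars_iff)
  with Pred.prems(2) show ?case
    by (force simp: e_c_def eval_in_c)
next
  case (Eq t1 t2)
  then show ?case
    by (cases t1; cases t2) (auto split: if_splits intro: sym)
qed auto

theorem lemma2: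
  fixes F :: "('c, 'p) fm" and cs :: "'c list"
  assumes "qfree F"
    and "consts_fm F \<subseteq> set cs"
  shows "valid TYPE('d) (Imp (star (e_c cs) F) (in_c_vars cs (RV F)))"
  using eval_star_e_c_imp_RV_in_consts[OF assms(2)]
  by (auto simp: valid_def eval_in_c_vars finite_RV)

end
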